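(* Let $\Omega\subset\mathbb{R}^n$ be open and $f\in C^2(\Omega)\cap C(\bar\Omega)$ with $|\mathbf Hf(x)|\le1$ for all $x\in\Omega$, where $\mathbf Hf$ is the Hessian matrix and $|\cdot|$ its operator norm. Then for all $\sigma,\eta>0$, $$\{x\in\Omega:|f(x)|\le\sigma\eta\}\subset\{x\in\Omega:|\nabla f(x)|\le\sigma+\eta\}\cup N_\sigma\Big(\partial\Omega\cup\big(\{f=0\}\cap\{|\nabla f|>\eta\}\big)\Big).$$
   Context: $N_\sigma(E)$ denotes the (open) $\sigma$-neighborhood of a set $E$; the sets $\{f=0\}$ and $\{|\nabla f|>\eta\}$ are subsets of $\Omega$. *)

theory Defs
  imports "HOL-Analysis.Analysis"
begin

definition nbhd :: "real \<Rightarrow> ('a::metric_space) set \<Rightarrow> 'a set" where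
  "nbhd \<sigma> E = {x. \<exists>y\<in>E. dist x y < \<sigma>}"

end

theory Submission
  imports Defs
begin

text \<open>Let \<open>x\<close> lie in the sublevel set but have \<open>|\<nabla>f(x)| > \<sigma> + \<eta>\<close>. If the ball of radius \<open>\<sigma>\<close>
  about \<open>x\<close> leaves \<open>\<Omega>\<close>, it meets \<open>\<partial>\<Omega>\<close>. Otherwise move from \<open>x\<close> in the direction that
  decreases \<open>|f|\<close> fastest. Since \<open>\<nabla>f\<close> is 1-Lipschitz, within distance \<open>t < \<sigma>\<close> the slope of \<open>|f|\<close>
  along this line stays below \<open>-(|\<nabla>f(x)| - \<sigma>) < -\<eta>\<close>, so \<open>f\<close> vanishes before
  \<open>t = \<sigma>\<eta> / (|\<nabla>f(x)| - \<sigma>) < \<sigma>\<close>, at a point where \<open>|\<nabla>f|\<close> still exceeds \<open>\<eta>\<close>.\<close>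

lemma DERIV_le_neg_imp_zero:
  fixes g g' :: "real \<Rightarrow> real"
  assumes "0 \<le> T" "0 \<le> g 0" "g 0 \<le> c * T"
    and deriv: "\<And>t. t \<in> {0..T} \<Longrightarrow> (g has_real_derivative g' t) (at t)"
    and slope: "\<And>t. t \<in> {0..T} \<Longrightarrow> g' t \<le> - c"
  shows "\<exists>t\<in>{0..T}. g t = 0"
proof -
  have "g T + c * T \<le> g 0 + c * 0"
  proof (rule DERIV_nonpos_imp_nonincreasing[where f = "\<lambda>t. g t + c * t"])
    fix t assume "0 \<le> t" "t \<le> T"
    then show "\<exists>y. ((\<lambda>t. g t + c * t) has_real_derivative y) (at t) \<and> y \<le> 0"
      using deriv[of t] slope[of t]
      by (intro exI[of _ "g' t + c"]) (auto intro!: derivative_eq_intros)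
  qed fact
  then have "g T \<le> 0"
    using assms(3) by simp
  moreover have "continuous_on {0..T} g"
    using deriv by (meson DERIV_isCont continuous_at_imp_continuous_on)
  ultimately show ?thesis
    using IVT2'[of g T 0 0] assms(1,2) by auto
qed

lemma zero_with_large_gradient_in_ball_nonneg:
  fixes f :: "'a::real_inner \<Rightarrow> real" and Df :: "'a \<Rightarrow> 'a"
  assumes grad: "\<And>y. y \<in> ball x \<sigma> \<Longrightarrow> (f has_derivative (\<lambda>h. Df y \<bullet> h)) (at y)"
    and lip: "\<And>y. y \<in> ball x \<sigma> \<Longrightarrow> norm (Df y - Df x) \<le> dist y x"
    and "0 < \<sigma>" "0 \<le> f x" "f x \<le> \<sigma> * \<eta>" "\<sigma> + \<eta> < norm (Df x)"
  shows "\<exists>y\<in>ball x \<sigma>. f y = 0 \<and> \<eta> < norm (Df y)"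
proof -
  define d where "d = norm (Df x)"
  define u where "u = - (1 / d) *\<^sub>R Df x"
  define T where "T = \<sigma> * \<eta> / (d - \<sigma>)"
  have "0 \<le> \<eta>"
    using assms(3-5) by (meson order.trans zero_le_mult_iff not_le)
  then have d: "0 < d" "\<sigma> + \<eta> < d"
    using assms(3,6) unfolding d_def by linarith+
  have norm_u: "norm u = 1" and Df_u: "Df x \<bullet> u = - d"
    using d unfolding u_def d_def by (simp_all add: power2_norm_eq_inner[symmetric] power2_eq_square)
  have "\<sigma> * \<eta> < \<sigma> * (d - \<sigma>)"
    using d assms(3) by simp
  then have T: "0 \<le> T" "T < \<sigma>" "f x \<le> (d - \<sigma>) * T"
    using d assms(3,5) \<open>0 \<le> \<eta>\<close> by (simp_all add: T_def pos_divide_less_eq mult.commute)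
  have in_ball: "x + t *\<^sub>R u \<in> ball x \<sigma>" "dist (x + t *\<^sub>R u) x = t" if "t \<in> {0..T}" for t
    using that T norm_u by (auto simp: dist_norm)
  have slope: "Df (x + t *\<^sub>R u) \<bullet> u \<le> - (d - \<sigma>)" if t: "t \<in> {0..T}" for t
  proof -
    let ?y = "x + t *\<^sub>R u"
    have "Df ?y \<bullet> u = Df x \<bullet> u + (Df ?y - Df x) \<bullet> u"
      by (simp add: inner_diff_left)
    also have "\<dots> \<le> - d + norm (Df ?y - Df x)"
      using Cauchy_Schwarz_ineq2[of "Df ?y - Df x" u] norm_u Df_u by simp
    also have "\<dots> \<le> - d + t"
      using lip[OF in_ball(1)[OF t]] in_ball(2)[OF t] by simp
    finally show ?thesis
      using t T by simp
  qed
  have deriv: "((\<lambda>t. f (x + t *\<^sub>R u)) has_real_derivative Df (x + t *\<^sub>R u) \<bullet> u) (at t)"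
    if "t \<in> {0..T}" for t
  proof -
    have "((\<lambda>t. x + t *\<^sub>R u) has_derivative (\<lambda>h. h *\<^sub>R u)) (at t)"
      by (auto intro!: derivative_eq_intros)
    from has_derivative_compose[OF this grad[OF in_ball(1)[OF that]]]
    show ?thesis
      unfolding has_field_derivative_def by (simp add: o_def mult.commute[of _ "Df _ \<bullet> u"])
  qed
  obtain t where t: "t \<in> {0..T}" "f (x + t *\<^sub>R u) = 0"
    using DERIV_le_neg_imp_zero[of T "\<lambda>t. f (x + t *\<^sub>R u)" "d - \<sigma>" "\<lambda>t. Df (x + t *\<^sub>R u) \<bullet> u"]
      T assms(4) deriv slope by auto
  have "\<eta> < d - \<sigma>"
    using d by simp
  also have "\<dots> \<le> - (Df (x + t *\<^sub>R u) \<bullet> u)"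
    using slope[OF t(1)] by simp
  also have "\<dots> \<le> norm (Df (x + t *\<^sub>R u))"
    using Cauchy_Schwarz_ineq2[of "Df (x + t *\<^sub>R u)" u] norm_u by simp
  finally show ?thesis
    using t in_ball(1) by blast
qed

lemma zero_with_large_gradient_in_ball:
  fixes f :: "'a::real_inner \<Rightarrow> real" and Df :: "'a \<Rightarrow> 'a"
  assumes grad: "\<And>y. y \<in> ball x \<sigma> \<Longrightarrow> (f has_derivative (\<lambda>h. Df y \<bullet> h)) (at y)"
    and lip: "\<And>y. y \<in> ball x \<sigma> \<Longrightarrow> norm (Df y - Df x) \<le> dist y x"
    and "0 < \<sigma>" "\<bar>f x\<bar> \<le> \<sigma> * \<eta>" "\<sigma> + \<eta> < norm (Df x)"
  shows "\<exists>y\<in>ball x \<sigma>. f y = 0 \<and> \<eta> < norm (Df y)"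
proof (cases "0 \<le> f x")
  case True
  then show ?thesis
    using zero_with_large_gradient_in_ball_nonneg[OF grad lip] assms(3-5) by simp
next
  case False
  have "\<exists>y\<in>ball x \<sigma>. - f y = 0 \<and> \<eta> < norm (- Df y)"
  proof (rule zero_with_large_gradient_in_ball_nonneg)
    show "((\<lambda>y. - f y) has_derivative (\<lambda>h. - Df y \<bullet> h)) (at y)" if "y \<in> ball x \<sigma>" for y
      using has_derivative_minus[OF grad[OF that]] by simp
    show "norm (- Df y - - Df x) \<le> dist y x" if "y \<in> ball x \<sigma>" for y
      using lip[OF that] by (simp add: norm_minus_commute)
  qed (use False assms(3-5) in auto)
  then show ?thesis
    by simp
qed

lemma frontier_in_ball_if_not_subset:
  fixes \<Omega> :: "'a::real_normed_vector set"
  assumes "x \<in> \<Omega>" "\<not> ball x r \<subseteq> \<Omega>"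
  shows "\<exists>z\<in>frontier \<Omega>. dist x z < r"
proof -
  have "0 < r"
    using assms(2) by (metis ball_eq_empty empty_subsetI linorder_not_less)
  then have "ball x r \<inter> frontier \<Omega> \<noteq> {}"
    using assms centre_in_ball by (intro connected_Int_frontier) blast+
  then show ?thesis
    by auto
qed

theorem mainTheorem6:
  fixes \<Omega> :: "(real^'n) set"
    and f :: "real^'n \<Rightarrow> real"
    and Df :: "real^'n \<Rightarrow> real^'n"
    and Hf :: "real^'n \<Rightarrow> real^'n^'n"
    and \<sigma> \<eta> :: real
  assumes "open \<Omega>"
    and grad: "\<And>x. x \<in> \<Omega> \<Longrightarrow> (f has_derivative (\<lambda>h. Df x \<bullet> h)) (at x)"
    and hess: "\<And>x. x \<in> \<Omega> \<Longrightarrow> (Df has_derivative (\<lambda>h. Hf x *v h)) (at x)"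
    and "continuous_on \<Omega> Hf"
    and "continuous_on (closure \<Omega>) f"
    and "\<And>x. x \<in> \<Omega> \<Longrightarrow> onorm (\<lambda>h. Hf x *v h) \<le> 1"
    and "\<sigma> > 0" and "\<eta> > 0"
  shows "{x\<in>\<Omega>. \<bar>f x\<bar> \<le> \<sigma> * \<eta>} \<subseteq>
           {x\<in>\<Omega>. norm (Df x) \<le> \<sigma> + \<eta>} \<union>
           nbhd \<sigma> (frontier \<Omega> \<union> ({x\<in>\<Omega>. f x = 0} \<inter> {x\<in>\<Omega>. norm (Df x) > \<eta>}))"
proof
  fix x assume x: "x \<in> {x\<in>\<Omega>. \<bar>f x\<bar> \<le> \<sigma> * \<eta>}"
  consider (small_gradient) "norm (Df x) \<le> \<sigma> + \<eta>" | (near_boundary) "\<not> ball x \<sigma> \<subseteq> \<Omega>"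
    | (interior) "ball x \<sigma> \<subseteq> \<Omega>" "\<sigma> + \<eta> < norm (Df x)"
    by fastforce
  then show "x \<in> {x\<in>\<Omega>. norm (Df x) \<le> \<sigma> + \<eta>} \<union>
      nbhd \<sigma> (frontier \<Omega> \<union> ({x\<in>\<Omega>. f x = 0} \<inter> {x\<in>\<Omega>. norm (Df x) > \<eta>}))"
  proof cases
    case near_boundary
    then show ?thesis
      using frontier_in_ball_if_not_subset[of x \<Omega> \<sigma>] x unfolding nbhd_def by auto
  next
    case small_gradient
    then show ?thesis
      using x by auto
  next
    case interior
    have lip: "norm (Df y - Df x) \<le> dist y x" if "y \<in> ball x \<sigma>" for y
    proof -
      have "norm (Df y - Df x) \<le> 1 * norm (y - x)"
      proof (rule differentiable_bound[where f' = "\<lambda>z h. Hf z *v h"])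
        show "(Df has_derivative (\<lambda>h. Hf z *v h)) (at z within ball x \<sigma>)" if "z \<in> ball x \<sigma>" for z
          using hess[of z] interior(1) that has_derivative_at_withinI by blast
      qed (use that interior(1) assms(6) \<open>\<sigma> > 0\<close> in auto)
      then show ?thesis
        by (simp add: dist_norm)
    qed
    have grad_ball: "(f has_derivative (\<lambda>h. Df y \<bullet> h)) (at y)" if "y \<in> ball x \<sigma>" for y
      using grad that interior(1) by blast
    obtain y where y: "y \<in> ball x \<sigma>" "f y = 0" "\<eta> < norm (Df y)"
      using zero_with_large_gradient_in_ball[of x \<sigma> f Df \<eta>, OF grad_ball lip] interior(2) x \<open>\<sigma> > 0\<close> by auto
    then have "y \<in> \<Omega>"
      using interior(1) by blast
    then show ?thesis
      using y unfolding nbhd_def by (intro UnI2 CollectI bexI[of _ y]) auto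
  qed
qed

end
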